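(* Let $Q=(q_1,\ldots,q_k)$ be an instance of the FIFO stack-up problem, let $n$ be the total number of bins in $Q$, and let $(Q,Q_0),(Q,Q_1),\ldots,(Q,Q_n)$ with $Q_0=Q$ and $Q_n=(\emptyset,\ldots,\emptyset)$ be a processing of $Q$ with $p$ stack-up places (i.e. $|\mathit{open}(Q,Q_i)|\le p$ for all $0\le i\le n$). Then the sequence $\mathcal{X}=(\mathit{open}(Q,Q_0),\ldots,\mathit{open}(Q,Q_n))$ is a directed path-decomposition of the sequence graph $G_Q$ of width at most $p-1$.
   Context: A bin $b$ carries a pallet symbol $\mathit{plt}(b)$ (a positive integer); bin $b$ is destined for pallet $\mathit{plt}(b)$. An instance is a list $Q=(q_1,\ldots,q_k)$ of finite sequences of bins, all bins (across all sequences) pairwise distinct; it is assumed that for every pallet symbol occurring, the sequences together contain at least two bins destined for it. $\mathit{plts}(Q)$ is the set of pallet symbols of all bins in $Q$. A subsequence of $q=(b_1,\ldots,b_n)$ is a suffix $q'=(b_j,\ldots,b_n)$, $j\ge 1$ (possibly empty), and $q-q'=(b_1,\ldots,b_{j-1})$. A configuration is a pair $(Q,Q')$ with $Q'=(q'_1,\ldots,q'_k)$, each $q'_j$ a subsequence of $q_j$. A pallet $t$ is open in $(Q,Q')$ if some bin destined for $t$ lies in some $q'_i$ and some bin destined for $t$ lies in some $q_j-q'_j$; $\mathit{open}(Q,Q')$ denotes the set of open pallets. A transformation step removes the first bin of one nonempty $q'_i$. A processing of $Q$ is a sequence of configurations $(Q,Q_0),\ldots,(Q,Q_n)$ with $Q_0=Q$,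 $Q_n$ consisting of $k$ empty sequences, each obtained from the previous by one transformation step; it uses $p$ stack-up places if every configuration has at most $p$ open pallets. The sequence graph $G_Q=(V,E)$ has $V=\mathit{plts}(Q)$ and an arc $(u,v)$ iff $u\ne v$ and some sequence $q_i$ contains a bin destined for $u$ at a position strictly before a bin destined for $v$. A directed path-decomposition of a digraph $G=(V,E)$ is a sequence $(X_1,\ldots,X_r)$ of subsets of $V$ with: (1) $X_1\cup\cdots\cup X_r=V$; (2) for every arc $(u,v)\in E$ there are $i\le j$ with $u\in X_i$, $v\in X_j$; (3) if $u\in X_i$ and $u\in X_j$ with $i\le j$ then $u\in X_l$ for all $i\le l\le j$. Its width is $\max_i |X_i|-1$. *)

theory Defs
  imports Main
begin

text \<open>Bins are elements of an arbitrary type 'b; the pallet symbol of a bin is given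
by a function plt. An instance is a list of lists of bins; a configuration Q'
is a list of the remaining suffixes.\<close>

definition plts :: "('b \<Rightarrow> nat) \<Rightarrow> 'b list list \<Rightarrow> nat set" where
  "plts plt Q = plt ` set (concat Q)"

definition is_instance :: "('b \<Rightarrow> nat) \<Rightarrow> 'b list list \<Rightarrow> bool" where
  "is_instance plt Q \<longleftrightarrow>
     distinct (concat Q) \<and>
     (\<forall>b \<in> set (concat Q). plt b > 0) \<and>
     (\<forall>t \<in> plts plt Q. card {b \<in> set (concat Q). plt b = t} \<ge> 2)"

text \<open>q - q' : the removed prefix of q, where q' is a suffix of q.\<close>
definition seq_minus :: "'b list \<Rightarrow> 'b list \<Rightarrow> 'b list" where
  "seq_minus q q' = take (length q - length q') q"

definition is_configuration :: "'b list list \<Rightarrow> 'b list list \<Rightarrow> bool" where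
  "is_configuration Q Q' \<longleftrightarrow> length Q' = length Q \<and>
     (\<forall>i < length Q. \<exists>j. Q' ! i = drop j (Q ! i))"

definition open_plts :: "('b \<Rightarrow> nat) \<Rightarrow> 'b list list \<Rightarrow> 'b list list \<Rightarrow> nat set" where
  "open_plts plt Q Q' = {t.
      (\<exists>i < length Q. \<exists>b \<in> set (Q' ! i). plt b = t) \<and>
      (\<exists>j < length Q. \<exists>b \<in> set (seq_minus (Q ! j) (Q' ! j)). plt b = t)}"

definition trans_step :: "'b list list \<Rightarrow> 'b list list \<Rightarrow> bool" where
  "trans_step Q1 Q2 \<longleftrightarrow> (\<exists>i < length Q1. Q1 ! i \<noteq> [] \<and> Q2 = Q1[i := tl (Q1 ! i)])"

text \<open>A processing of Q: the list (Q_0,...,Q_n) of second components of configurations.\<close>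
definition is_processing :: "'b list list \<Rightarrow> 'b list list list \<Rightarrow> bool" where
  "is_processing Q Qs \<longleftrightarrow> Qs \<noteq> [] \<and> Qs ! 0 = Q \<and>
     Qs ! (length Qs - 1) = replicate (length Q) [] \<and>
     (\<forall>i. Suc i < length Qs \<longrightarrow> trans_step (Qs ! i) (Qs ! Suc i))"

definition uses_places :: "('b \<Rightarrow> nat) \<Rightarrow> 'b list list \<Rightarrow> 'b list list list \<Rightarrow> nat \<Rightarrow> bool" where
  "uses_places plt Q Qs p \<longleftrightarrow> (\<forall>i < length Qs. card (open_plts plt Q (Qs ! i)) \<le> p)"

text \<open>Arcs of the sequence graph G_Q (vertex set plts plt Q).\<close>
definition seq_graph_arcs :: "('b \<Rightarrow> nat) \<Rightarrow> 'b list list \<Rightarrow> (nat \<times> nat) set" where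
  "seq_graph_arcs plt Q = {(u, v). u \<noteq> v \<and>
     (\<exists>q \<in> set Q. \<exists>i j. i < j \<and> j < length q \<and> plt (q ! i) = u \<and> plt (q ! j) = v)}"

definition directed_path_decomposition :: "'a set \<Rightarrow> ('a \<times> 'a) set \<Rightarrow> 'a set list \<Rightarrow> bool" where
  "directed_path_decomposition V E Xs \<longleftrightarrow>
     Xs \<noteq> [] \<and>
     \<Union> (set Xs) = V \<and>
     (\<forall>(u, v) \<in> E. \<exists>i j. i \<le> j \<and> j < length Xs \<and> u \<in> Xs ! i \<and> v \<in> Xs ! j) \<and>
     (\<forall>u i j l. i \<le> l \<and> l \<le> j \<and> j < length Xs \<and> u \<in> Xs ! i \<and> u \<in> Xs ! j \<longrightarrow> u \<in> Xs ! l)"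

definition dpd_width :: "'a set list \<Rightarrow> int" where
  "dpd_width Xs = int (Max (card ` set Xs)) - 1"

end

theory Submission
  imports Defs
begin

text \<open>Let \<open>S i\<close> be the set of bins still waiting in the \<open>i\<close>-th configuration; a pallet is
  open at time \<open>i\<close> iff it has a bin inside and a bin outside \<open>S i\<close>. As the \<open>S i\<close> shrink,
  each pallet is open during an interval of times. Since a step removes a single bin and each
  pallet has at least two bins, a pallet is open right after losing its first bin and right
  before losing its last one; so it is open at some time no later than any moment at which
  one of its bins is gone, and at some time no earlier than any moment at which one of its bins
  still waits. An arc \<open>(u, v)\<close> comes from bins \<open>q ! a\<close>, \<open>q ! c\<close> of one sequence with
  \<open>a < c\<close>, and by the FIFO order there is a moment at which \<open>q ! a\<close> is gone while
  \<open>q ! c\<close> still waits.\<close>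

definition open_pallets :: "('b \<Rightarrow> 'a) \<Rightarrow> 'b set \<Rightarrow> 'b set \<Rightarrow> 'a set" where
  "open_pallets plt B S = plt ` S \<inter> plt ` (B - S)"

lemma open_pallets_subset: "open_pallets plt B S \<subseteq> plt ` B"
  unfolding open_pallets_def by blast

lemma open_pallets_between:
  assumes "C \<subseteq> S" "S \<subseteq> A" "t \<in> open_pallets plt B A" "t \<in> open_pallets plt B C"
  shows "t \<in> open_pallets plt B S"
  using assms unfolding open_pallets_def by blast

lemma open_pallets_first_missing:
  assumes "S \<subseteq> insert x S'" "b1 \<in> S" "b2 \<in> S" "b1 \<noteq> b2" "plt b1 = t" "plt b2 = t"
    and "t \<in> plt ` (B - S')"
  shows "t \<in> open_pallets plt B S'"
proof -
  obtain b where "b \<in> {b1, b2}" "b \<noteq> x"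
    using assms(4) by blast
  then have "b \<in> S'" "plt b = t"
    using assms(1-3,5,6) by auto
  then show ?thesis
    using assms(7) unfolding open_pallets_def by blast
qed

lemma open_pallets_last_present:
  assumes "S \<subseteq> insert x S'" "b1 \<in> B - S'" "b2 \<in> B - S'" "b1 \<noteq> b2" "plt b1 = t" "plt b2 = t"
    and "t \<in> plt ` S"
  shows "t \<in> open_pallets plt B S"
proof -
  obtain b where "b \<in> {b1, b2}" "b \<noteq> x"
    using assms(4) by blast
  then have "b \<in> B - S" "plt b = t"
    using assms(1-3,5,6) by auto
  then show ?thesis
    using assms(7) unfolding open_pallets_def by blast
qed

locale bin_removal =
  fixes plt :: "'b \<Rightarrow> 'a" and B :: "'b set" and S :: "nat \<Rightarrow> 'b set" and n :: nat
  assumes start: "S 0 = B" and finish: "S n = {}"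
    and removal: "\<And>i. i < n \<Longrightarrow> \<exists>x. S i = insert x (S (Suc i))"
    and two_bins: "\<And>t. t \<in> plt ` B \<Longrightarrow> \<exists>b1\<in>B. \<exists>b2\<in>B. b1 \<noteq> b2 \<and> plt b1 = t \<and> plt b2 = t"
begin

abbreviation open_at :: "nat \<Rightarrow> 'a set" where
  "open_at i \<equiv> open_pallets plt B (S i)"

lemma antitone: "i \<le> j \<Longrightarrow> j \<le> n \<Longrightarrow> S j \<subseteq> S i"
proof (induction j rule: dec_induct)
  case (step k)
  then show ?case
    using removal[of k] by auto
qed simp

lemma open_before_removal:
  assumes "m \<le> n" "t \<in> plt ` (B - S m)"
  shows "\<exists>i\<le>m. t \<in> open_at i"
proof -
  obtain b1 b2 where b: "b1 \<in> B" "b2 \<in> B" "b1 \<noteq> b2" "plt b1 = t" "plt b2 = t"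
    using two_bins assms(2) by blast
  obtain k where k: "k < m" "t \<notin> plt ` (B - S k)" "t \<in> plt ` (B - S (Suc k))"
    using ex_least_nat_less[of "\<lambda>i. t \<in> plt ` (B - S i)" m] assms(2) start by auto
  obtain x where "S k = insert x (S (Suc k))"
    using removal k(1) assms(1) by (meson order.strict_trans2)
  moreover have "b1 \<in> S k" "b2 \<in> S k"
    using k(2) b by (metis DiffI imageI)+
  ultimately have "t \<in> open_at (Suc k)"
    using open_pallets_first_missing[OF equalityD1] b(3-5) k(3) by metis
  then show ?thesis
    using k(1) Suc_leI by blast
qed

lemma open_after_presence:
  assumes "m \<le> n" "t \<in> plt ` S m"
  shows "\<exists>j. m \<le> j \<and> j \<le> n \<and> t \<in> open_at j"
proof -
  have "t \<in> plt ` B"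
    using assms antitone[of 0 m] start by blast
  then obtain b1 b2 where b: "b1 \<in> B" "b2 \<in> B" "b1 \<noteq> b2" "plt b1 = t" "plt b2 = t"
    using two_bins by blast
  obtain k where k: "k < n - m" "t \<in> plt ` S (m + k)" "t \<notin> plt ` S (Suc (m + k))"
    using ex_least_nat_less[of "\<lambda>k. t \<notin> plt ` S (m + k)" "n - m"] assms finish by auto
  obtain x where "S (m + k) = insert x (S (Suc (m + k)))"
    using removal k(1) by (metis less_diff_conv add.commute)
  moreover have "b1 \<in> B - S (Suc (m + k))" "b2 \<in> B - S (Suc (m + k))"
    using k(3) b by (metis DiffI imageI)+
  ultimately have "t \<in> open_at (m + k)"
    using open_pallets_last_present[OF equalityD1] b(3-5) k(2) by metis
  then show ?thesis
    using k(1) by (intro exI[of _ "m + k"]) auto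
qed

lemma open_between:
  assumes "i \<le> l" "l \<le> j" "j \<le> n" "t \<in> open_at i" "t \<in> open_at j"
  shows "t \<in> open_at l"
proof -
  have "S j \<subseteq> S l" "S l \<subseteq> S i"
    using assms(1-3) antitone by auto
  then show ?thesis
    using assms(4,5) by (rule open_pallets_between)
qed

lemma Union_open_at: "(\<Union>i\<le>n. open_at i) = plt ` B"
proof
  show "(\<Union>i\<le>n. open_at i) \<subseteq> plt ` B"
    by (intro UN_least open_pallets_subset)
  show "plt ` B \<subseteq> (\<Union>i\<le>n. open_at i)"
  proof
    fix t
    assume "t \<in> plt ` B"
    then obtain i where "i \<le> n" "t \<in> open_at i"
      using open_before_removal[of n t] finish by auto
    then show "t \<in> (\<Union>i\<le>n. open_at i)"
      by blast
  qed
qed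

lemma open_pallets_directed_path_decomposition:
  assumes arcs: "\<And>u v. (u, v) \<in> E \<Longrightarrow> \<exists>m\<le>n. u \<in> plt ` (B - S m) \<and> v \<in> plt ` S m"
  shows "directed_path_decomposition (plt ` B) E (map open_at [0..<Suc n])"
    (is "directed_path_decomposition _ _ ?Xs")
proof -
  have nth_Xs: "?Xs ! i = open_at i" if "i \<le> n" for i
    using that by (simp del: upt_Suc)
  have "set ?Xs = open_at ` {..n}"
    by (simp only: set_map set_upt atLeast0LessThan lessThan_Suc_atMost)
  then have union: "\<Union> (set ?Xs) = plt ` B"
    using Union_open_at by simp
  have arc_cover: "\<exists>i j. i \<le> j \<and> j < length ?Xs \<and> u \<in> ?Xs ! i \<and> v \<in> ?Xs ! j"
    if uv: "(u, v) \<in> E" for u v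
  proof -
    obtain m where m: "m \<le> n" "u \<in> plt ` (B - S m)" "v \<in> plt ` S m"
      using arcs uv by blast
    obtain i where "i \<le> m" "u \<in> open_at i"
      using open_before_removal[OF m(1,2)] by blast
    moreover obtain j where "m \<le> j" "j \<le> n" "v \<in> open_at j"
      using open_after_presence[OF m(1,3)] by blast
    ultimately show ?thesis
      using m(1) nth_Xs by (intro exI[of _ i] exI[of _ j]) (simp del: upt_Suc)
  qed
  have convex: "u \<in> ?Xs ! l"
    if "i \<le> l" "l \<le> j" "j < length ?Xs" "u \<in> ?Xs ! i" "u \<in> ?Xs ! j" for u i j l
    using that open_between[of i l j u] nth_Xs by (simp del: upt_Suc)
  show ?thesis
    unfolding directed_path_decomposition_def using union arc_cover convex by auto
qed

end

lemma disjoint_nth_concat: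
  assumes "distinct (concat xs)" "i < length xs" "j < length xs" "i \<noteq> j"
  shows "set (xs ! i) \<inter> set (xs ! j) = {}"
  using assms
proof (induction xs arbitrary: i j)
  case (Cons x xs)
  then show ?case
    using nth_mem by (cases i; cases j) fastforce+
qed simp

lemma set_concat_conv_nth: "set (concat xs) = (\<Union>i<length xs. set (xs ! i))"
  by (force simp: in_set_conv_nth)

lemma seq_minus_drop: "seq_minus q (drop c q) = take c q"
  by (cases "c \<le> length q") (simp_all add: seq_minus_def)

lemma distinct_set_take:
  assumes "distinct xs"
  shows "set (take c xs) = set xs - set (drop c xs)"
proof -
  have "set (take c xs) \<inter> set (drop c xs) = {}"
    using assms by (simp add: set_take_disj_set_drop_if_distinct)
  moreover have "set xs = set (take c xs) \<union> set (drop c xs)"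
    by (metis append_take_drop_id set_append)
  ultimately show ?thesis
    by blast
qed

lemma set_seq_minus_configuration:
  assumes dist: "distinct (concat Q)" and conf: "is_configuration Q Q'" and j: "j < length Q"
  shows "set (seq_minus (Q ! j) (Q' ! j)) = set (Q ! j) - set (concat Q')"
proof -
  have len: "length Q' = length Q" and drop: "\<forall>i<length Q. \<exists>c. Q' ! i = drop c (Q ! i)"
    using conf unfolding is_configuration_def by auto
  then have sub: "set (Q' ! i) \<subseteq> set (Q ! i)" if "i < length Q" for i
    using that by (metis set_drop_subset)
  obtain c where c: "Q' ! j = drop c (Q ! j)"
    using drop j by blast
  have "set (Q ! j) \<inter> set (concat Q') = set (Q' ! j)"
  proof -
    have "set (Q ! j) \<inter> set (Q' ! i) = {}" if "i < length Q" "i \<noteq> j" for i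
      using disjoint_nth_concat[OF dist j that(1)] sub[OF that(1)] that(2) by blast
    then show ?thesis
      using sub[OF j] j unfolding set_concat_conv_nth len by blast
  qed
  moreover have "set (take c (Q ! j)) = set (Q ! j) - set (drop c (Q ! j))"
    using dist j by (simp add: distinct_concat_iff distinct_set_take)
  ultimately show ?thesis
    by (simp add: c seq_minus_drop) blast
qed

lemma open_plts_eq_open_pallets:
  assumes dist: "distinct (concat Q)" and conf: "is_configuration Q Q'"
  shows "open_plts plt Q Q' = open_pallets plt (set (concat Q)) (set (concat Q'))"
proof -
  have remaining: "(\<Union>i<length Q. set (Q' ! i)) = set (concat Q')"
    using conf unfolding set_concat_conv_nth is_configuration_def by simp
  have removed: "(\<Union>j<length Q. set (seq_minus (Q ! j) (Q' ! j))) = set (concat Q) - set (concat Q')"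
    using set_seq_minus_configuration[OF dist conf] unfolding set_concat_conv_nth[of Q] by blast
  have "open_plts plt Q Q' =
      plt ` (\<Union>i<length Q. set (Q' ! i)) \<inter> plt ` (\<Union>j<length Q. set (seq_minus (Q ! j) (Q' ! j)))"
    unfolding open_plts_def by (auto simp: image_iff) (metis lessThan_iff)+
  then show ?thesis
    unfolding remaining removed open_pallets_def .
qed

lemma configuration_suffix_closed:
  assumes dist: "distinct (concat Q)" and conf: "is_configuration Q Q'" and j: "j < length Q"
    and "a \<le> c" "c < length (Q ! j)" and "Q ! j ! a \<in> set (concat Q')"
  shows "Q ! j ! c \<in> set (concat Q')"
proof -
  obtain d where d: "Q' ! j = drop d (Q ! j)"
    using conf j unfolding is_configuration_def by blast
  have a_removed: "Q ! j ! a \<notin> set (take d (Q ! j))"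
    using set_seq_minus_configuration[OF dist conf j] assms(6) by (simp add: d seq_minus_drop)
  have "d \<le> a"
  proof (rule ccontr)
    assume "\<not> d \<le> a"
    then have "take d (Q ! j) ! a = Q ! j ! a" "a < length (take d (Q ! j))"
      using assms(4,5) by auto
    then show False
      using a_removed by (metis nth_mem)
  qed
  then have "drop d (Q ! j) ! (c - d) = Q ! j ! c" "c - d < length (drop d (Q ! j))"
    using assms(4,5) by auto
  then have "Q ! j ! c \<in> set (Q' ! j)"
    unfolding d by (metis nth_mem)
  then show ?thesis
    using conf j by (auto simp: is_configuration_def set_concat_conv_nth)
qed

lemma set_concat_trans_step:
  assumes "trans_step Q1 Q2"
  obtains x where "set (concat Q1) = insert x (set (concat Q2))"
proof -
  from assms obtain i where i: "i < length Q1" "Q1 ! i \<noteq> []" and Q2: "Q2 = Q1[i := tl (Q1 ! i)]"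
    unfolding trans_step_def by blast
  have "set (concat Q1) = set (concat (take i Q1 @ (hd (Q1 ! i) # tl (Q1 ! i)) # drop (Suc i) Q1))"
    by (simp only: list.collapse[OF i(2)] id_take_nth_drop[OF i(1), symmetric])
  also have "\<dots> = insert (hd (Q1 ! i)) (set (concat Q2))"
    using Q2 upd_conv_take_nth_drop[OF i(1)] by auto
  finally have "set (concat Q1) = insert (hd (Q1 ! i)) (set (concat Q2))" .
  then show thesis ..
qed

lemma is_configuration_trans_step:
  assumes conf: "is_configuration Q Q1" and step: "trans_step Q1 Q2"
  shows "is_configuration Q Q2"
proof -
  from step obtain i where i: "i < length Q1" and Q2: "Q2 = Q1[i := tl (Q1 ! i)]"
    unfolding trans_step_def by blast
  have "\<exists>c. Q2 ! j = drop c (Q ! j)" if j: "j < length Q" for j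
  proof -
    obtain c where c: "Q1 ! j = drop c (Q ! j)"
      using conf j unfolding is_configuration_def by blast
    show ?thesis
    proof (cases "j = i")
      case True
      then have "Q2 ! j = drop (Suc c) (Q ! j)"
        using i c unfolding Q2 by (simp add: tl_drop drop_Suc)
      then show ?thesis ..
    qed (use c Q2 in auto)
  qed
  then show ?thesis
    using conf unfolding is_configuration_def Q2 by simp
qed

lemma is_processing_configuration:
  assumes "is_processing Q Qs" "i < length Qs"
  shows "is_configuration Q (Qs ! i)"
  using assms(2)
proof (induction i)
  case 0
  then show ?case
    using assms(1) unfolding is_processing_def is_configuration_def by (metis drop0)
next
  case (Suc i)
  have "trans_step (Qs ! i) (Qs ! Suc i)"
    using assms(1) Suc.prems unfolding is_processing_def by blast
  then show ?case
    using Suc is_configuration_trans_step by simp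
qed

lemma processing_separates_arc:
  assumes dist: "distinct (concat Q)" and proc: "is_processing Q Qs"
    and uv: "(u, v) \<in> seq_graph_arcs plt Q"
  shows "\<exists>m<length Qs. u \<in> plt ` (set (concat Q) - set (concat (Qs ! m)))
                     \<and> v \<in> plt ` set (concat (Qs ! m))"
proof -
  obtain q a c where q: "q \<in> set Q" "a < c" "c < length q" "plt (q ! a) = u" "plt (q ! c) = v"
    using uv unfolding seq_graph_arcs_def by blast
  obtain j where j: "j < length Q" "q = Q ! j"
    using q(1) by (metis in_set_conv_nth)
  define S where "S k = set (concat (Qs ! k))" for k
  define N where "N = length Qs - 1"
  have "q ! a \<in> set (concat Q)"
    using q(1-3) by (metis UN_I order.strict_trans nth_mem set_concat)
  moreover have "Qs ! 0 = Q" "Qs ! N = replicate (length Q) []"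
    using proc unfolding is_processing_def N_def by auto
  ultimately obtain k where k: "k < N" "q ! a \<in> S k" "q ! a \<notin> S (Suc k)"
    using ex_least_nat_less[of "\<lambda>k. q ! a \<notin> S k" N] unfolding S_def by auto
  have "k < length Qs"
    using k(1) unfolding N_def by simp
  \<comment> \<open>\<open>q ! c\<close> waits behind \<open>q ! a\<close>, and step \<open>k\<close> removes only \<open>q ! a\<close>\<close>
  then have waiting: "q ! c \<in> S k"
    using configuration_suffix_closed[OF dist is_processing_configuration[OF proc] j(1)] k(2) q(2,3)
    unfolding S_def j(2) by (meson less_imp_le)
  have "trans_step (Qs ! k) (Qs ! Suc k)"
    using proc k(1) unfolding is_processing_def N_def by auto
  then obtain x where x: "S k = insert x (S (Suc k))"
    unfolding S_def by (rule set_concat_trans_step)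
  have "q ! c \<noteq> q ! a"
    using dist j q(2,3) by (simp add: distinct_concat_iff nth_eq_iff_index_eq)
  then have "q ! c \<in> S (Suc k)"
    using waiting x k(2,3) by auto
  then show ?thesis
    using k \<open>q ! a \<in> set (concat Q)\<close> q(4,5) unfolding S_def N_def
    by (intro exI[of _ "Suc k"]) auto
qed

lemma two_le_card_obtain:
  assumes "2 \<le> card A"
  obtains a b where "a \<in> A" "b \<in> A" "a \<noteq> b"
  using assms card_le_Suc0_iff_eq[of A] by (metis card.infinite not_less_eq_eq numeral_2_eq_2 zero_le)

lemma is_instance_two_bins:
  assumes "is_instance plt Q" "t \<in> plts plt Q"
  shows "\<exists>b1\<in>set (concat Q). \<exists>b2\<in>set (concat Q). b1 \<noteq> b2 \<and> plt b1 = t \<and> plt b2 = t"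
proof -
  have "2 \<le> card {b \<in> set (concat Q). plt b = t}"
    using assms unfolding is_instance_def by blast
  then show ?thesis
    by (rule two_le_card_obtain) blast
qed

lemma is_processing_bin_removal:
  assumes "is_instance plt Q" "is_processing Q Qs" "length Qs = Suc n"
  shows "bin_removal plt (set (concat Q)) (\<lambda>i. set (concat (Qs ! i))) n"
proof
  show "set (concat (Qs ! 0)) = set (concat Q)" "set (concat (Qs ! n)) = {}"
    using assms(2,3) unfolding is_processing_def by auto
  show "\<exists>x. set (concat (Qs ! i)) = insert x (set (concat (Qs ! Suc i)))" if "i < n" for i
    using assms(2,3) that set_concat_trans_step unfolding is_processing_def by (metis Suc_mono)
  show "\<exists>b1\<in>set (concat Q). \<exists>b2\<in>set (concat Q). b1 \<noteq> b2 \<and> plt b1 = t \<and> plt b2 = t"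
    if "t \<in> plt ` set (concat Q)" for t
    using is_instance_two_bins[OF assms(1)] that unfolding plts_def by blast
qed

lemma map_open_plts_processing:
  assumes "distinct (concat Q)" "is_processing Q Qs"
  shows "map (open_plts plt Q) Qs =
    map (\<lambda>i. open_pallets plt (set (concat Q)) (set (concat (Qs ! i)))) [0..<length Qs]"
  using open_plts_eq_open_pallets[OF assms(1) is_processing_configuration[OF assms(2)]]
  by (intro nth_equalityI) simp_all

lemma dpd_width_le:
  assumes "Xs \<noteq> []" "\<And>X. X \<in> set Xs \<Longrightarrow> card X \<le> p"
  shows "dpd_width Xs \<le> int p - 1"
proof -
  have "Max (card ` set Xs) \<le> p"
    using assms by (simp add: Max_le_iff)
  then show ?thesis
    unfolding dpd_width_def by simp
qed

theorem theorem1: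
  fixes plt :: "'b \<Rightarrow> nat" and Q :: "'b list list" and Qs :: "'b list list list" and p :: nat
  assumes "is_instance plt Q"
    and "length Qs = length (concat Q) + 1"
    and "is_processing Q Qs"
    and "uses_places plt Q Qs p"
  shows "directed_path_decomposition (plts plt Q) (seq_graph_arcs plt Q)
           (map (open_plts plt Q) Qs)
       \<and> dpd_width (map (open_plts plt Q) Qs) \<le> int p - 1"
proof -
  define n where "n = length (concat Q)"
  define S where "S i = set (concat (Qs ! i))" for i
  have dist: "distinct (concat Q)"
    using assms(1) unfolding is_instance_def by simp
  have len: "length Qs = Suc n"
    using assms(2) unfolding n_def by simp
  have removal: "bin_removal plt (set (concat Q)) S n"
    using is_processing_bin_removal[OF assms(1,3) len] unfolding S_def .
  have Xs: "map (open_plts plt Q) Qs = map (\<lambda>i. open_pallets plt (set (concat Q)) (S i)) [0..<Suc n]"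
    using map_open_plts_processing[OF dist assms(3)] len unfolding S_def by simp
  have "directed_path_decomposition (plts plt Q) (seq_graph_arcs plt Q) (map (open_plts plt Q) Qs)"
    unfolding Xs plts_def
  proof (rule bin_removal.open_pallets_directed_path_decomposition[OF removal])
    show "\<exists>m\<le>n. u \<in> plt ` (set (concat Q) - S m) \<and> v \<in> plt ` S m"
      if "(u, v) \<in> seq_graph_arcs plt Q" for u v
      using processing_separates_arc[OF dist assms(3) that] len unfolding S_def by (simp add: less_Suc_eq_le)
  qed
  moreover have "dpd_width (map (open_plts plt Q) Qs) \<le> int p - 1"
    using assms(4) len unfolding uses_places_def by (intro dpd_width_le) (auto simp: in_set_conv_nth)
  ultimately show ?thesis ..
qed
end
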